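(* Let $\mathcal{P}$ be an arbitrary LS-packing of $n>1$ unit diameter disks in $\mathbb{E}^2$. Then $c(\mathcal{P})\leq\lfloor 2n-2\sqrt{n}\rfloor$.
   Context: A packing of disks in $\mathbb{E}^2$ is a family of disks with pairwise disjoint interiors. A packing is totally separable (a TS-packing) if any two of its disks can be separated by a line that is disjoint from the interior of every disk of the packing. A packing $\mathcal{P}$ is locally separable (an LS-packing) if each disk of $\mathcal{P}$ together with the disks of $\mathcal{P}$ tangent to it form a TS-packing. The contact number $c(\mathcal{P})$ is the number of unordered pairs of disks of $\mathcal{P}$ tangent to each other. *)

theory Defs
  imports "HOL-Analysis.Analysis"
begin

definition is_disk :: "(real^2) set \<Rightarrow> bool" where
  "is_disk D \<longleftrightarrow> (\<exists>c r. r > 0 \<and> D = cball c r)"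

definition packing :: "(real^2) set set \<Rightarrow> bool" where
  "packing P \<longleftrightarrow> (\<forall>D\<in>P. is_disk D) \<and>
     (\<forall>D1\<in>P. \<forall>D2\<in>P. D1 \<noteq> D2 \<longrightarrow> interior D1 \<inter> interior D2 = {})"

definition TS_packing :: "(real^2) set set \<Rightarrow> bool" where
  "TS_packing P \<longleftrightarrow> packing P \<and>
     (\<forall>D1\<in>P. \<forall>D2\<in>P. D1 \<noteq> D2 \<longrightarrow>
        (\<exists>a b. a \<noteq> 0 \<and> (\<forall>D\<in>P. interior D \<inter> {x. a \<bullet> x = b} = {}) \<and>
               D1 \<subseteq> {x. a \<bullet> x \<le> b} \<and> D2 \<subseteq> {x. a \<bullet> x \<ge> b}))"

definition tangent :: "(real^2) set \<Rightarrow> (real^2) set \<Rightarrow> bool" where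
  "tangent D1 D2 \<longleftrightarrow> D1 \<noteq> D2 \<and> D1 \<inter> D2 \<noteq> {} \<and> interior D1 \<inter> interior D2 = {}"

definition LS_packing :: "(real^2) set set \<Rightarrow> bool" where
  "LS_packing P \<longleftrightarrow> packing P \<and>
     (\<forall>D\<in>P. TS_packing ({D} \<union> {E\<in>P. tangent D E}))"

definition contact_number :: "(real^2) set set \<Rightarrow> nat" where
  "contact_number P = card {{D1, D2} | D1 D2. D1 \<in> P \<and> D2 \<in> P \<and> tangent D1 D2}"

end

theory Submission
  imports Defs
begin

(* Local separability forces any two neighbours of a disk to subtend an angle of at least pi/2
   at its centre: the line separating them misses the interior of the middle disk, so the
   neighbour on the far side of that line from the middle centre sits at distance exactly 1
   straight across it.

   Orient every contact so that its direction lies in [0, pi) and split the contacts into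
   those with direction in [0, pi/2) and those in [pi/2, pi). Within one class every disk has
   at most one outgoing and at most one incoming contact, and there are no cycles, so the class
   is a union of k_i vertex-disjoint paths and has n - k_i contacts. Along a path of the first
   class x increases strictly and y weakly; along one of the second, y increases strictly and
   x weakly decreases. Hence two paths of different classes share at most one disk, so
   n <= k_1 k_2 and c = 2n - k_1 - k_2 <= 2n - 2 sqrt(k_1 k_2) <= 2n - 2 sqrt n. *)

definition sinks :: "('a \<times> 'a) set \<Rightarrow> 'a set \<Rightarrow> 'a set" where
  "sinks R V = {v \<in> V. \<forall>w. (v, w) \<notin> R}"

lemma sinks_subset: "sinks R V \<subseteq> V"
  by (auto simp: sinks_def)

lemma card_rel_add_card_sinks:
  assumes "finite V" and "R \<subseteq> V \<times> V" and "single_valued R"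
  shows "card R + card (sinks R V) = card V"
proof -
  have "inj_on fst R"
    using assms(3) by (auto simp: inj_on_def single_valued_def)
  moreover have "fst ` R = V - sinks R V"
    using assms(2) by (force simp: sinks_def)
  ultimately have "card R = card V - card (sinks R V)"
    using assms(1) by (metis card_image card_Diff_subset finite_subset sinks_subset)
  then show ?thesis
    using assms(1) card_mono[OF _ sinks_subset] by fastforce
qed

lemma acyclic_reaches_sink:
  assumes "finite V" and "R \<subseteq> V \<times> V" and "acyclic R" and "v \<in> V"
  obtains s where "s \<in> sinks R V" and "(v, s) \<in> R\<^sup>*"
proof -
  have "finite R"
    using assms(1,2) by (meson finite_SigmaI finite_subset)
  then have "wf (R\<inverse>)"
    using assms(3) by (rule finite_acyclic_wf_converse)
  then obtain s where s: "(v, s) \<in> R\<^sup>*" and maximal: "\<And>t. (t, s) \<in> R\<inverse> \<Longrightarrow> (v, t) \<notin> R\<^sup>*"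
    by (rule wfE_min[where Q = "{s. (v, s) \<in> R\<^sup>*}"]) auto
  have "s \<in> V"
    using s assms(2,4) by (induction rule: rtrancl_induct) auto
  moreover have "(s, w) \<notin> R" for w
    using s maximal by (meson converseI rtrancl.rtrancl_into_rtrancl)
  ultimately show ?thesis
    using s by (intro that) (auto simp: sinks_def)
qed

(* The vertices reaching a common sink form a chain, since in-degrees are at most one;
   so the map sending a vertex to its pair of reachable sinks is injective. *)
lemma card_le_card_sinks_mult:
  assumes "finite V" and "R \<subseteq> V \<times> V" and "S \<subseteq> V \<times> V"
    and "acyclic R" and "acyclic S"
    and "single_valued (R\<inverse>)" and "single_valued (S\<inverse>)"
    and chains_meet_once: "\<And>v w. (v, w) \<in> R\<^sup>+ \<Longrightarrow> (v, w) \<notin> S\<^sup>+ \<and> (w, v) \<notin> S\<^sup>+"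
  shows "card V \<le> card (sinks R V) * card (sinks S V)"
proof -
  have "\<forall>v\<in>V. \<exists>s. s \<in> sinks R V \<and> (v, s) \<in> R\<^sup>*"
    using acyclic_reaches_sink[OF assms(1,2,4)] by metis
  then obtain f where f: "\<And>v. v \<in> V \<Longrightarrow> f v \<in> sinks R V \<and> (v, f v) \<in> R\<^sup>*"
    by metis
  have "\<forall>v\<in>V. \<exists>s. s \<in> sinks S V \<and> (v, s) \<in> S\<^sup>*"
    using acyclic_reaches_sink[OF assms(1,3,5)] by metis
  then obtain g where g: "\<And>v. v \<in> V \<Longrightarrow> g v \<in> sinks S V \<and> (v, g v) \<in> S\<^sup>*"
    by metis
  have comparable: "(v, w) \<in> Q\<^sup>* \<or> (w, v) \<in> Q\<^sup>*"
    if "single_valued (Q\<inverse>)" and "(v, s) \<in> Q\<^sup>*" and "(w, s) \<in> Q\<^sup>*" for Q :: "('a \<times> 'a) set" and v w s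
    using single_valued_confluent[OF that(1), of s v w] that(2,3) by (auto simp: rtrancl_converse)
  have "inj_on (\<lambda>v. (f v, g v)) V"
  proof (rule inj_onI, rule ccontr)
    fix v w
    assume "v \<in> V" and "w \<in> V" and "(f v, g v) = (f w, g w)" and "v \<noteq> w"
    then have "(v, w) \<in> R\<^sup>+ \<or> (w, v) \<in> R\<^sup>+" and "(v, w) \<in> S\<^sup>+ \<or> (w, v) \<in> S\<^sup>+"
      using comparable[OF assms(6)] comparable[OF assms(7)] f g
      by (metis Pair_inject rtrancl_eq_or_trancl)+
    then show False
      using chains_meet_once by blast
  qed
  moreover have "(\<lambda>v. (f v, g v)) ` V \<subseteq> sinks R V \<times> sinks S V"
    using f g by auto
  moreover have "finite (sinks R V \<times> sinks S V)"
    using assms(1) by (meson finite_SigmaI finite_subset sinks_subset)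
  ultimately show ?thesis
    by (metis card_inj_on_le card_cartesian_product)
qed

definition quadrant_rel :: "('v \<Rightarrow> 'v \<Rightarrow> bool) \<Rightarrow> ('v \<Rightarrow> real) \<Rightarrow> ('v \<Rightarrow> real) \<Rightarrow> ('v \<times> 'v) set" where
  "quadrant_rel T X Y = {(v, w). T v w \<and> X v < X w \<and> Y v \<le> Y w}"

lemma quadrant_rel_subset:
  "(\<And>v w. T v w \<Longrightarrow> v \<in> V \<and> w \<in> V) \<Longrightarrow> quadrant_rel T X Y \<subseteq> V \<times> V"
  by (auto simp: quadrant_rel_def)

lemma trancl_quadrant_rel: "(quadrant_rel T X Y)\<^sup>+ \<subseteq> {(v, w). X v < X w \<and> Y v \<le> Y w}"
proof -
  have "quadrant_rel T X Y \<subseteq> {(v, w). X v < X w \<and> Y v \<le> Y w}"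
    by (auto simp: quadrant_rel_def)
  then have "(quadrant_rel T X Y)\<^sup>+ \<subseteq> {(v, w). X v < X w \<and> Y v \<le> Y w}\<^sup>+"
    by (rule trancl_mono_subset)
  also have "\<dots> = {(v, w). X v < X w \<and> Y v \<le> Y w}"
    by (rule trancl_id) (auto simp: trans_def)
  finally show ?thesis .
qed

lemma acyclic_quadrant_rel: "acyclic (quadrant_rel T X Y)"
proof -
  have "(v, v) \<notin> (quadrant_rel T X Y)\<^sup>+" for v
  proof
    assume "(v, v) \<in> (quadrant_rel T X Y)\<^sup>+"
    then have "(v, v) \<in> {(v, w). X v < X w \<and> Y v \<le> Y w}"
      using trancl_quadrant_rel ..
    then show False
      by simp
  qed
  then show ?thesis
    by (simp add: acyclic_def)
qed

lemma single_valued_quadrant_rel: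
  assumes sym: "\<And>v w. T v w \<Longrightarrow> T w v"
    and non_acute: "\<And>v w1 w2. T v w1 \<Longrightarrow> T v w2 \<Longrightarrow> w1 \<noteq> w2 \<Longrightarrow>
      (X w1 - X v) * (X w2 - X v) + (Y w1 - Y v) * (Y w2 - Y v) \<le> 0"
  shows "single_valued (quadrant_rel T X Y)" and "single_valued ((quadrant_rel T X Y)\<inverse>)"
proof -
  show "single_valued (quadrant_rel T X Y)"
  proof (rule single_valuedI, rule ccontr)
    fix v w1 w2
    assume "(v, w1) \<in> quadrant_rel T X Y" and "(v, w2) \<in> quadrant_rel T X Y" and "w1 \<noteq> w2"
    then have "T v w1" "T v w2" "X v < X w1" "X v < X w2" "Y v \<le> Y w1" "Y v \<le> Y w2"
      by (simp_all add: quadrant_rel_def)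
    then have "(X w1 - X v) * (X w2 - X v) > 0" and "(Y w1 - Y v) * (Y w2 - Y v) \<ge> 0"
      by simp_all
    then show False
      using non_acute[OF \<open>T v w1\<close> \<open>T v w2\<close> \<open>w1 \<noteq> w2\<close>] by linarith
  qed
  show "single_valued ((quadrant_rel T X Y)\<inverse>)"
  proof (rule single_valuedI, rule ccontr)
    fix w v1 v2
    assume "(w, v1) \<in> (quadrant_rel T X Y)\<inverse>" and "(w, v2) \<in> (quadrant_rel T X Y)\<inverse>" and "v1 \<noteq> v2"
    then have "T w v1" "T w v2" "X v1 < X w" "X v2 < X w" "Y v1 \<le> Y w" "Y v2 \<le> Y w"
      using sym by (simp_all add: quadrant_rel_def)
    then have "(X v1 - X w) * (X v2 - X w) > 0" and "(Y v1 - Y w) * (Y v2 - Y w) \<ge> 0"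
      by (simp_all add: mult_neg_neg mult_nonpos_nonpos)
    then show False
      using non_acute[OF \<open>T w v1\<close> \<open>T w v2\<close> \<open>v1 \<noteq> v2\<close>] by linarith
  qed
qed

(* Rotating by -pi/2, (x, y) |-> (y, -x), turns the edge directions in [pi/2, pi) into those of
   the quadrant [0, pi/2); so every edge is oriented in exactly one way in exactly one of the
   two relations. *)
lemma card_edges_eq_card_quadrant_rels:
  fixes T :: "'v \<Rightarrow> 'v \<Rightarrow> bool" and X Y :: "'v \<Rightarrow> real"
  assumes "finite V" and edges_in: "\<And>v w. T v w \<Longrightarrow> v \<in> V \<and> w \<in> V"
    and sym: "\<And>v w. T v w \<Longrightarrow> T w v"
    and distinct: "\<And>v w. T v w \<Longrightarrow> X v \<noteq> X w \<or> Y v \<noteq> Y w"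
  shows "card {{v, w} | v w. T v w} = card (quadrant_rel T X Y) + card (quadrant_rel T Y (\<lambda>v. - X v))"
proof -
  let ?R = "quadrant_rel T X Y" and ?S = "quadrant_rel T Y (\<lambda>v. - X v)"
  have edge: "T v w" if "(v, w) \<in> ?R \<union> ?S" for v w
    using that by (auto simp: quadrant_rel_def)
  have one_orientation: "(v, w) \<in> ?R \<union> ?S \<longleftrightarrow> (w, v) \<notin> ?R \<union> ?S" if "T v w" for v w
    using sym[OF that] distinct[OF that] that by (auto simp: quadrant_rel_def)
  have antisym: "(w, v) \<notin> ?R \<union> ?S" if "(v, w) \<in> ?R \<union> ?S" for v w
    using one_orientation[OF edge[OF that]] that by blast
  have "{{v, w} | v w. T v w} = (\<lambda>(v, w). {v, w}) ` (?R \<union> ?S)"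
  proof
    show "{{v, w} | v w. T v w} \<subseteq> (\<lambda>(v, w). {v, w}) ` (?R \<union> ?S)"
    proof
      fix e
      assume "e \<in> {{v, w} | v w. T v w}"
      then obtain v w where e: "e = {v, w}" and "T v w"
        by blast
      then consider "(v, w) \<in> ?R \<union> ?S" | "(w, v) \<in> ?R \<union> ?S"
        using one_orientation by blast
      then show "e \<in> (\<lambda>(v, w). {v, w}) ` (?R \<union> ?S)"
        using e by cases (auto simp: insert_commute)
    qed
    show "(\<lambda>(v, w). {v, w}) ` (?R \<union> ?S) \<subseteq> {{v, w} | v w. T v w}"
      using edge by force
  qed
  moreover have "inj_on (\<lambda>(v, w). {v, w}) (?R \<union> ?S)"
  proof (rule inj_onI, clarify)
    fix v w v' w'
    assume "(v, w) \<in> ?R \<union> ?S" and "(v', w') \<in> ?R \<union> ?S" and "{v, w} = {v', w'}"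
    then show "v = v' \<and> w = w'"
      using antisym by (metis doubleton_eq_iff)
  qed
  moreover have "?R \<inter> ?S = {}"
    by (auto simp: quadrant_rel_def)
  moreover have "finite ?R" and "finite ?S"
    using quadrant_rel_subset[OF edges_in] assms(1) by (metis finite_SigmaI finite_subset)+
  ultimately show ?thesis
    by (simp add: card_image card_Un_disjoint)
qed

lemma two_sqrt_le_add:
  fixes n x y :: real
  assumes "0 \<le> x" and "0 \<le> y" and "n \<le> x * y"
  shows "2 * sqrt n \<le> x + y"
proof -
  have "sqrt n \<le> sqrt (x * y)"
    using assms(3) by (rule real_sqrt_le_mono)
  also have "\<dots> \<le> (x + y) / 2"
    using assms(1,2) by (rule arith_geo_mean_sqrt)
  finally show ?thesis
    by simp
qed

lemma card_le_card_sinks_quadrant_rels: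
  fixes T :: "'v \<Rightarrow> 'v \<Rightarrow> bool" and X Y :: "'v \<Rightarrow> real"
  defines "R \<equiv> quadrant_rel T X Y" and "S \<equiv> quadrant_rel T Y (\<lambda>v. - X v)"
  assumes "finite V" and edges_in: "\<And>v w. T v w \<Longrightarrow> v \<in> V \<and> w \<in> V"
    and "single_valued (R\<inverse>)" and "single_valued (S\<inverse>)"
  shows "card V \<le> card (sinks R V) * card (sinks S V)"
proof (rule card_le_card_sinks_mult)
  show "R \<subseteq> V \<times> V"
    unfolding R_def using edges_in by (rule quadrant_rel_subset)
  show "S \<subseteq> V \<times> V"
    unfolding S_def using edges_in by (rule quadrant_rel_subset)
  show "acyclic R" and "acyclic S"
    unfolding R_def S_def by (rule acyclic_quadrant_rel)+
  show "(v, w) \<notin> S\<^sup>+ \<and> (w, v) \<notin> S\<^sup>+" if "(v, w) \<in> R\<^sup>+" for v w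
    using that trancl_quadrant_rel[of T X Y] trancl_quadrant_rel[of T Y "\<lambda>v. - X v"]
    unfolding R_def S_def by fastforce
qed fact+

definition non_acute_at_neighbours :: "('v \<Rightarrow> 'v \<Rightarrow> bool) \<Rightarrow> ('v \<Rightarrow> 'a::real_inner) \<Rightarrow> bool" where
  "non_acute_at_neighbours T pos \<longleftrightarrow>
     (\<forall>v w1 w2. T v w1 \<and> T v w2 \<and> w1 \<noteq> w2 \<longrightarrow> (pos w1 - pos v) \<bullet> (pos w2 - pos v) \<le> 0)"

lemma card_edges_le_if_non_acute:
  fixes T :: "'v \<Rightarrow> 'v \<Rightarrow> bool" and pos :: "'v \<Rightarrow> real^2"
  assumes "finite V" and edges_in: "\<And>v w. T v w \<Longrightarrow> v \<in> V \<and> w \<in> V"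
    and sym: "\<And>v w. T v w \<Longrightarrow> T w v"
    and distinct: "\<And>v w. T v w \<Longrightarrow> pos v \<noteq> pos w"
    and "non_acute_at_neighbours T pos"
  shows "real (card {{v, w} | v w. T v w}) \<le> 2 * real (card V) - 2 * sqrt (real (card V))"
proof -
  define X where "X v = pos v $ 1" for v
  define Y where "Y v = pos v $ 2" for v
  define R where "R = quadrant_rel T X Y"
  define S where "S = quadrant_rel T Y (\<lambda>v. - X v)"
  have non_acute: "(X w1 - X v) * (X w2 - X v) + (Y w1 - Y v) * (Y w2 - Y v) \<le> 0"
    if "T v w1" and "T v w2" and "w1 \<noteq> w2" for v w1 w2
    using assms(5) that by (simp add: non_acute_at_neighbours_def inner_vec_def sum_2 X_def Y_def)
  have non_acute_rotated: "(Y w1 - Y v) * (Y w2 - Y v) + (- X w1 - - X v) * (- X w2 - - X v) \<le> 0"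
    if "T v w1" and "T v w2" and "w1 \<noteq> w2" for v w1 w2
    using non_acute[OF that] by (simp add: algebra_simps)
  have single_valued: "single_valued R" "single_valued (R\<inverse>)" "single_valued S" "single_valued (S\<inverse>)"
    unfolding R_def S_def
    using single_valued_quadrant_rel[of T X Y, OF sym non_acute]
      single_valued_quadrant_rel[of T Y "\<lambda>v. - X v", OF sym non_acute_rotated]
    by blast+
  have "R \<subseteq> V \<times> V"
    unfolding R_def using edges_in by (rule quadrant_rel_subset)
  have "S \<subseteq> V \<times> V"
    unfolding S_def using edges_in by (rule quadrant_rel_subset)
  have "card {{v, w} | v w. T v w} = card R + card S"
    unfolding R_def S_def using assms(1) edges_in sym
  proof (rule card_edges_eq_card_quadrant_rels)
    show "X v \<noteq> X w \<or> Y v \<noteq> Y w" if "T v w" for v w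
      using distinct[OF that] by (auto simp: X_def Y_def vec_eq_iff forall_2)
  qed
  moreover have "card R + card (sinks R V) = card V" and "card S + card (sinks S V) = card V"
    using card_rel_add_card_sinks[OF assms(1)] \<open>R \<subseteq> V \<times> V\<close> \<open>S \<subseteq> V \<times> V\<close> single_valued
    by blast+
  moreover have "2 * sqrt (real (card V)) \<le> real (card (sinks R V)) + real (card (sinks S V))"
  proof (rule two_sqrt_le_add)
    have "card V \<le> card (sinks R V) * card (sinks S V)"
      using assms(1) edges_in single_valued(2,4) unfolding R_def S_def
      by (rule card_le_card_sinks_quadrant_rels)
    then show "real (card V) \<le> real (card (sinks R V)) * real (card (sinks S V))"
      by (metis of_nat_le_iff of_nat_mult)
  qed simp_all
  ultimately show ?thesis
    by linarith
qed

lemma cball_subset_halfspace_le: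
  fixes q a :: "'a::real_inner"
  assumes "cball q r \<subseteq> {x. a \<bullet> x \<le> b}" and "r \<ge> 0"
  shows "a \<bullet> q + r * norm a \<le> b"
proof (cases "a = 0")
  case True
  have "q \<in> cball q r"
    using assms(2) by simp
  then have "a \<bullet> q \<le> b"
    using assms(1) by blast
  then show ?thesis
    using True by simp
next
  case False
  have "q + (r / norm a) *\<^sub>R a \<in> cball q r"
    using assms(2) by (simp add: dist_norm)
  then have "a \<bullet> (q + (r / norm a) *\<^sub>R a) \<le> b"
    using assms(1) by blast
  then show ?thesis
    using False by (simp add: inner_add_right power2_norm_eq_inner[symmetric] power2_eq_square)
qed

lemma ball_disjoint_hyperplane:
  fixes p a :: "'a::real_inner"
  assumes "ball p r \<inter> {x. a \<bullet> x = b} = {}"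
  shows "r * norm a \<le> \<bar>a \<bullet> p - b\<bar>"
proof (cases "a = 0")
  case True
  then show ?thesis by simp
next
  case False
  define x where "x = p + ((b - a \<bullet> p) / (norm a)\<^sup>2) *\<^sub>R a"
  have "a \<bullet> x = b"
    using False by (simp add: x_def inner_add_right power2_norm_eq_inner[symmetric])
  with assms have "\<not> dist p x < r"
    by (metis IntI empty_iff mem_Collect_eq mem_ball)
  moreover have "dist p x = \<bar>a \<bullet> p - b\<bar> / norm a"
    using False by (simp add: x_def dist_norm power2_eq_square abs_minus_commute)
  ultimately show ?thesis
    using False by (simp add: divide_less_eq mult.commute)
qed

lemma inner_nonpos_if_opposite_sides:
  fixes p q1 q2 a :: "'a::real_inner"
  assumes "a \<noteq> 0"
    and q1: "a \<bullet> q1 + r * norm a \<le> b" and q2: "b + r * norm a \<le> a \<bullet> q2"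
    and p: "b + r * norm a \<le> a \<bullet> p"
    and "norm (q1 - p) \<le> 2 * r"
  shows "(q1 - p) \<bullet> (q2 - p) \<le> 0"
proof -
  \<comment> \<open>Equality holds in Cauchy-Schwarz, which forces \<open>q1 - p = - (2 * r / norm a) *\<^sub>R a\<close>.\<close>
  define u where "u = q1 - p"
  have "norm a > 0"
    using assms(1) by simp
  have "norm a * (2 * r) \<le> - (a \<bullet> u)"
    using q1 p by (simp add: u_def inner_diff_right algebra_simps)
  moreover have "- (a \<bullet> u) \<le> norm a * norm u"
    using norm_cauchy_schwarz[of "- a" u] by simp
  moreover have "norm a * norm u \<le> norm a * (2 * r)"
    using assms(5) by (simp add: u_def mult_left_mono)
  ultimately have au: "- (a \<bullet> u) = norm a * norm u" and "norm a * norm u = norm a * (2 * r)"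
    by linarith+
  then have u: "norm a *\<^sub>R u = - (2 * r) *\<^sub>R a" and "norm u = 2 * r"
    using \<open>norm a > 0\<close> norm_cauchy_schwarz_eq[of "- a" u] by simp_all
  have "a \<bullet> p = a \<bullet> q1 + 2 * (r * norm a)"
    using au \<open>norm u = 2 * r\<close> by (simp add: u_def inner_diff_right algebra_simps)
  then have "a \<bullet> p \<le> a \<bullet> q2"
    using q1 q2 by linarith
  have "norm a * (u \<bullet> (q2 - p)) = - (2 * r) * (a \<bullet> (q2 - p))"
    using u by (metis inner_scaleR_left)
  also have "\<dots> \<le> 0"
    using \<open>a \<bullet> p \<le> a \<bullet> q2\<close> \<open>norm u = 2 * r\<close> norm_ge_zero[of u]
    by (simp add: inner_diff_right mult_le_0_iff)
  finally show ?thesis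
    using \<open>norm a > 0\<close> by (simp add: u_def mult_le_0_iff)
qed

lemma separated_neighbours_non_acute:
  fixes p q1 q2 a :: "'a::real_inner"
  assumes "a \<noteq> 0" and "ball p r \<inter> {x. a \<bullet> x = b} = {}"
    and "cball q1 r \<subseteq> {x. a \<bullet> x \<le> b}" and "cball q2 r \<subseteq> {x. a \<bullet> x \<ge> b}"
    and "dist p q1 \<le> 2 * r" and "dist p q2 \<le> 2 * r"
  shows "(q1 - p) \<bullet> (q2 - p) \<le> 0"
proof -
  have "r \<ge> 0"
    using assms(5) zero_le_dist[of p q1] by linarith
  have q1: "a \<bullet> q1 + r * norm a \<le> b"
    using assms(3) \<open>r \<ge> 0\<close> by (rule cball_subset_halfspace_le)
  have "(- a) \<bullet> q2 + r * norm (- a) \<le> - b"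
    using assms(4) \<open>r \<ge> 0\<close> by (intro cball_subset_halfspace_le) auto
  then have q2: "b + r * norm a \<le> a \<bullet> q2"
    by simp
  have "norm (q1 - p) \<le> 2 * r" and "norm (q2 - p) \<le> 2 * r"
    using assms(5,6) by (simp_all add: dist_norm norm_minus_commute)
  have "r * norm a \<le> \<bar>a \<bullet> p - b\<bar>"
    using assms(2) by (rule ball_disjoint_hyperplane)
  then consider "b + r * norm a \<le> a \<bullet> p" | "- b + r * norm (- a) \<le> (- a) \<bullet> p"
    by (cases "b \<le> a \<bullet> p") simp_all
  then show ?thesis
  proof cases
    case 1
    show ?thesis
      using inner_nonpos_if_opposite_sides[OF assms(1) q1 q2 1] \<open>norm (q1 - p) \<le> 2 * r\<close> .
  next
    case 2
    have "(q2 - p) \<bullet> (q1 - p) \<le> 0"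
      by (rule inner_nonpos_if_opposite_sides[of "- a" q2 r "- b"])
        (use assms(1) q1 q2 2 \<open>norm (q2 - p) \<le> 2 * r\<close> in simp_all)
    then show ?thesis
      by (simp add: inner_commute)
  qed
qed

lemma LS_packing_neighbours_non_acute:
  assumes "LS_packing P" and "cball p r \<in> P"
    and "cball q1 r \<in> P" and "tangent (cball p r) (cball q1 r)"
    and "cball q2 r \<in> P" and "tangent (cball p r) (cball q2 r)"
    and "cball q1 r \<noteq> cball q2 r"
  shows "(q1 - p) \<bullet> (q2 - p) \<le> 0"
proof -
  let ?Q = "{cball p r} \<union> {E \<in> P. tangent (cball p r) E}"
  have "TS_packing ?Q"
    using assms(1,2) unfolding LS_packing_def by blast
  then have separable: "\<forall>D1\<in>?Q. \<forall>D2\<in>?Q. D1 \<noteq> D2 \<longrightarrow>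
      (\<exists>a b. a \<noteq> 0 \<and> (\<forall>D\<in>?Q. interior D \<inter> {x. a \<bullet> x = b} = {}) \<and>
             D1 \<subseteq> {x. a \<bullet> x \<le> b} \<and> D2 \<subseteq> {x. a \<bullet> x \<ge> b})"
    unfolding TS_packing_def by (rule conjunct2)
  have "cball q1 r \<in> ?Q" and "cball q2 r \<in> ?Q"
    using assms(3-6) by simp_all
  then obtain a b where "a \<noteq> 0" and lines: "\<forall>D\<in>?Q. interior D \<inter> {x. a \<bullet> x = b} = {}"
    and "cball q1 r \<subseteq> {x. a \<bullet> x \<le> b}" and "cball q2 r \<subseteq> {x. a \<bullet> x \<ge> b}"
    using separable assms(7) by meson
  moreover have "ball p r \<inter> {x. a \<bullet> x = b} = {}"
    using lines[rule_format, of "cball p r"] by simp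
  moreover have "dist p q \<le> 2 * r" if "tangent (cball p r) (cball q r)" for q
  proof -
    have "cball p r \<inter> cball q r \<noteq> {}"
      using that unfolding tangent_def by (elim conjE)
    then obtain x where "dist p x \<le> r" and "dist q x \<le> r"
      by (metis disjoint_iff mem_cball)
    then show ?thesis
      using dist_triangle[of p q x] by (simp add: dist_commute)
  qed
  ultimately show ?thesis
    using assms(4,6) by (intro separated_neighbours_non_acute) simp_all
qed

lemma tangent_sym: "tangent D E \<Longrightarrow> tangent E D"
  unfolding tangent_def by (metis Int_commute)

lemma LS_packing_contacts_non_acute:
  assumes "LS_packing P" and cball_ctr: "\<And>D. D \<in> P \<Longrightarrow> cball (ctr D) r = D"
  shows "non_acute_at_neighbours (\<lambda>D E. D \<in> P \<and> E \<in> P \<and> tangent D E) ctr"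
  unfolding non_acute_at_neighbours_def
proof (intro allI impI, elim conjE)
  fix D E1 E2
  assume "D \<in> P" "E1 \<in> P" "E2 \<in> P" "tangent D E1" "tangent D E2" "E1 \<noteq> E2"
  then show "(ctr E1 - ctr D) \<bullet> (ctr E2 - ctr D) \<le> 0"
    by (intro LS_packing_neighbours_non_acute[OF assms(1), where r = r]) (simp_all add: cball_ctr)
qed

theorem theorem2:
  fixes P :: "(real^2) set set" and n :: nat
  assumes "LS_packing P"
    and "\<forall>D\<in>P. \<exists>c. D = cball c (1/2)"
    and "finite P" and "card P = n" and "n > 1"
  shows "int (contact_number P) \<le> \<lfloor>2 * real n - 2 * sqrt (real n)\<rfloor>"
proof -
  obtain ctr where cball_ctr: "\<And>D. D \<in> P \<Longrightarrow> cball (ctr D) (1/2) = D"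
    using assms(2) by metis
  define T where "T D E \<longleftrightarrow> D \<in> P \<and> E \<in> P \<and> tangent D E" for D E
  have edges_in: "D \<in> P \<and> E \<in> P" and sym: "T E D" if "T D E" for D E
    using that by (auto simp: T_def intro: tangent_sym)
  have distinct: "ctr D \<noteq> ctr E" if "T D E" for D E
    using that cball_ctr unfolding T_def tangent_def by metis
  have "non_acute_at_neighbours T ctr"
    unfolding T_def using assms(1) cball_ctr by (rule LS_packing_contacts_non_acute)
  with assms(3) edges_in sym distinct
  have "real (card {{D, E} | D E. T D E}) \<le> 2 * real (card P) - 2 * sqrt (real (card P))"
    by (rule card_edges_le_if_non_acute)
  moreover have "{{D, E} | D E. T D E} = {{D1, D2} | D1 D2. D1 \<in> P \<and> D2 \<in> P \<and> tangent D1 D2}"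
    by (simp add: T_def)
  ultimately show ?thesis
    using assms(4) by (simp add: contact_number_def le_floor_iff)
qed

end
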